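(* For every $\delta<\frac{1}{2e^4}$, every $T>0$ and every $\Delta>0$, there exists an ergodic MDP $\mathcal{M}$ with $S=3$ states, $A=2$ actions and optimal bias span $H=1/2$ such that any algorithm that computes a $\Delta$-tight upper bound for the optimal bias span with probability $1-\delta$, using a generative model, uses in expectation more than $T$ samples when run on $\mathcal{M}$.
   Context: A (finite) MDP is a tuple $(\mathcal{S},\mathcal{A},P,r)$ with $|\mathcal{S}|=S$, $|\mathcal{A}|=A$, transition kernel $P$ (with $p_{s,a}$ the distribution of the next state from $(s,a)$) and reward distributions $r(s,a)$ supported in $[0,1]$ with mean $\bar r_{s,a}$. An MDP is ergodic if for every stationary deterministic policy and every pair of states $s,s'$ the expected hitting time of $s'$ from $s$ is finite. For a stationary policy $\pi$, the gain is $g_\pi(s)=\lim_{T\to\infty}\frac1T\mathbb{E}_\pi[\sum_{t=0}^{T-1}r_t\mid s_0=s]$. In such an MDP the optimal gain $g^\star$ is a constant and there is a vector $b^\star\in\mathbb{R}^S$ (unique up to an additive constant) with $g^\star+b^\star(s)=\max_a\{\bar r_{s,a}+p_{s,a}b^\star\}$ for all $s$, namely the bias vector $b_\pi=\sum_{t\ge1}(P_\pi^{t-1}-\bar P_\pi)\bar r_\pi$ of the optimal policy, where $\bar P_\pi=\lim_T\frac1T\sum_{t=1}^TP_\pi^{t-1}$. The optimal bias span is $H=\max_s b^\star(s)-\min_s b^\star(s)$. A generative model allows the algorithm, at each step, to choose any pair $(s,a)$ and observe an independent reward sample $r\sim r(s,a)$ and next state $s'\sim p_{s,a}$; the number of samples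 is the number of such queries before the algorithm stops. An algorithm computes a $\Delta$-tight upper bound for the optimal bias span with probability $1-\delta$ if, on every MDP with optimal bias span $H$, it outputs $\hat H$ with $\mathbb{P}(H\le\hat H\le H+\Delta)\ge1-\delta$. *)

theory Defs
  imports "HOL-Probability.Probability"
begin

record ('s, 'a) mdp =
  trans :: "'s \<Rightarrow> 'a \<Rightarrow> 's pmf"
  rew   :: "'s \<Rightarrow> 'a \<Rightarrow> real pmf"

definition valid_mdp :: "('s, 'a) mdp \<Rightarrow> bool" where
  "valid_mdp M \<longleftrightarrow> (\<forall>s a. set_pmf (rew M s a) \<subseteq> {0..1})"

definition mean_rew :: "('s, 'a) mdp \<Rightarrow> 's \<Rightarrow> 'a \<Rightarrow> real" where
  "mean_rew M s a = measure_pmf.expectation (rew M s a) (\<lambda>x. x)"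

(* Probability that the Markov chain of the stationary deterministic policy pol,
   started in x, has not visited the target state t at times 0,...,n. *)
fun avoid_prob :: "('s::finite, 'a) mdp \<Rightarrow> ('s \<Rightarrow> 'a) \<Rightarrow> 's \<Rightarrow> nat \<Rightarrow> 's \<Rightarrow> real" where
  "avoid_prob M pol t 0 x = (if x = t then 0 else 1)"
| "avoid_prob M pol t (Suc n) x =
     (if x = t then 0 else (\<Sum>y\<in>UNIV. pmf (trans M x (pol x)) y * avoid_prob M pol t n y))"

(* Expected hitting time E[tau] of t from s, tau = min {n. s_n = t}, via E[tau] = \<Sum>_n P(tau > n). *)
definition expected_hitting_time :: "('s::finite, 'a) mdp \<Rightarrow> ('s \<Rightarrow> 'a) \<Rightarrow> 's \<Rightarrow> 's \<Rightarrow> ennreal" where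
  "expected_hitting_time M pol s t = (\<Sum>n. ennreal (avoid_prob M pol t n s))"

definition ergodic :: "('s::finite, 'a) mdp \<Rightarrow> bool" where
  "ergodic M \<longleftrightarrow> (\<forall>pol s t. expected_hitting_time M pol s t < \<infinity>)"

definition optimality_eq :: "('s::finite, 'a::finite) mdp \<Rightarrow> real \<Rightarrow> ('s \<Rightarrow> real) \<Rightarrow> bool" where
  "optimality_eq M g b \<longleftrightarrow>
     (\<forall>s. g + b s = Max (range (\<lambda>a. mean_rew M s a + (\<Sum>s'\<in>UNIV. pmf (trans M s a) s' * b s'))))"

definition span :: "('s::finite \<Rightarrow> real) \<Rightarrow> real" where
  "span b = Max (range b) - Min (range b)"

(* optimal bias span H = max b* - min b*, where b* is the (up to constants unique) solution *)
definition opt_bias_span :: "('s::finite, 'a::finite) mdp \<Rightarrow> real" where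
  "opt_bias_span M = (THE h. \<exists>g b. optimality_eq M g b \<and> h = span b)"

type_synonym ('s, 'a) history = "('s \<times> 'a \<times> real \<times> 's) list"

datatype ('s, 'a) decision = Query 's 'a | Stop real

type_synonym ('s, 'a) algorithm = "('s, 'a) history \<Rightarrow> ('s, 'a) decision pmf"

datatype ('s, 'a) config = Running "('s, 'a) history" | Done "('s, 'a) history" real

fun step_conf :: "('s, 'a) mdp \<Rightarrow> ('s, 'a) algorithm \<Rightarrow> ('s, 'a) config \<Rightarrow> ('s, 'a) config pmf" where
  "step_conf M alg (Running h) =
     bind_pmf (alg h) (\<lambda>d. case d of
        Stop x \<Rightarrow> return_pmf (Done h x)
      | Query s a \<Rightarrow> bind_pmf (rew M s a) (\<lambda>r. bind_pmf (trans M s a)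
                       (\<lambda>s'. return_pmf (Running (h @ [(s, a, r, s')])))))"
| "step_conf M alg (Done h x) = return_pmf (Done h x)"

fun run :: "('s, 'a) mdp \<Rightarrow> ('s, 'a) algorithm \<Rightarrow> nat \<Rightarrow> ('s, 'a) config pmf" where
  "run M alg 0 = return_pmf (Running [])"
| "run M alg (Suc n) = bind_pmf (run M alg n) (step_conf M alg)"

fun is_running :: "('s, 'a) config \<Rightarrow> bool" where
  "is_running (Running _) = True"
| "is_running (Done _ _) = False"

(* The number N of samples satisfies N > n iff the algorithm is still running after n+1 steps.
   Expected number of samples E[N] = \<Sum>_n P(N > n) (= \<infinity> if the algorithm may not stop). *)
definition expected_samples :: "('s, 'a) mdp \<Rightarrow> ('s, 'a) algorithm \<Rightarrow> ennreal" where
  "expected_samples M alg = (\<Sum>n. ennreal (measure_pmf.prob (run M alg (Suc n)) {c. is_running c}))"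

definition output_prob :: "('s, 'a) mdp \<Rightarrow> ('s, 'a) algorithm \<Rightarrow> real set \<Rightarrow> real" where
  "output_prob M alg I = (SUP n. measure_pmf.prob (run M alg n) {c. \<exists>h x. c = Done h x \<and> x \<in> I})"

definition tight_bound_alg :: "real \<Rightarrow> real \<Rightarrow> ('s::finite, 'a::finite) algorithm \<Rightarrow> bool" where
  "tight_bound_alg \<delta> \<Delta> alg \<longleftrightarrow>
     (\<forall>M :: ('s, 'a) mdp. valid_mdp M \<and> ergodic M \<longrightarrow>
        output_prob M alg {opt_bias_span M .. opt_bias_span M + \<Delta>} \<ge> 1 - \<delta>)"

end

theory Submission
  imports Defs
begin

text \<open>
  Consider two MDPs \<open>M\<close> and \<open>M'\<close> with the same lazy random walk as dynamics (from every state,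
  with every action, jump to a uniformly random state with probability \<open>q\<close> and stay otherwise);
  they differ only in the reward at one state \<open>x\<close>, which is \<open>0\<close> in \<open>M\<close> and Bernoulli(\<open>\<epsilon>\<close>)
  in \<open>M'\<close>. The bias of a lazy walk is its mean reward divided by \<open>q\<close>, so for
  \<open>q = \<epsilon> / (\<Delta> + 1)\<close> the optimal bias spans are \<open>1/2\<close> and at least \<open>\<Delta> + 1\<close>: an algorithm
  computing \<open>\<Delta>\<close>-tight bounds must output disjoint intervals on the two MDPs.

  Every configuration after \<open>K\<close> steps is at least \<open>(1 - \<epsilon>)^K\<close> times as likely under \<open>M'\<close> as
  under \<open>M\<close>. If the expected number of samples on \<open>M\<close> is at most \<open>T\<close>, the algorithm is
  still running after \<open>K\<close> steps with probability at most \<open>T / K\<close>, so it has output a value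
  in the interval of \<open>M\<close> with probability at least \<open>1 - \<delta> - T / K\<close>; under \<open>M'\<close> this
  wrong answer then has probability at least \<open>(1 - \<epsilon>)^K (1 - \<delta> - T / K)\<close>, which exceeds
  \<open>\<delta>\<close> for suitable \<open>K\<close> and \<open>\<epsilon>\<close> as soon as \<open>\<delta> < 1/2\<close>.
\<close>

section \<open>Runs of an algorithm\<close>

definition running :: "('s, 'a) config set" where
  "running = {c. is_running c}"

definition stopped_in :: "real set \<Rightarrow> ('s, 'a) config set" where
  "stopped_in I = {c. \<exists>h x. c = Done h x \<and> x \<in> I}"

lemma output_prob_eq_SUP_stopped_in:
  "output_prob M alg I = (SUP n. measure_pmf.prob (run M alg n) (stopped_in I))"
  by (simp add: output_prob_def stopped_in_def)

lemma measure_bind_pmf_mono: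
  assumes "\<And>x. x \<in> set_pmf p \<Longrightarrow> measure_pmf.prob (f x) A \<le> measure_pmf.prob (g x) B"
  shows "measure_pmf.prob (bind_pmf p f) A \<le> measure_pmf.prob (bind_pmf p g) B"
proof -
  have "emeasure (bind_pmf p f) A \<le> emeasure (bind_pmf p g) B"
    unfolding emeasure_bind_pmf
    by (intro nn_integral_mono_AE)
       (auto simp: AE_measure_pmf_iff measure_pmf.emeasure_eq_measure assms)
  then show ?thesis
    by (simp add: measure_pmf.emeasure_eq_measure)
qed

lemma prob_stopped_in_Suc:
  "measure_pmf.prob (run M alg n) (stopped_in I) \<le> measure_pmf.prob (run M alg (Suc n)) (stopped_in I)"
proof -
  have "measure_pmf.prob (bind_pmf (run M alg n) return_pmf) (stopped_in I)
      \<le> measure_pmf.prob (bind_pmf (run M alg n) (step_conf M alg)) (stopped_in I)"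
  proof (rule measure_bind_pmf_mono)
    show "measure_pmf.prob (return_pmf c) (stopped_in I) \<le> measure_pmf.prob (step_conf M alg c) (stopped_in I)" for c
      by (cases c) (auto simp: measure_return stopped_in_def)
  qed
  then show ?thesis
    by (simp add: bind_return_pmf')
qed

lemma prob_stopped_in_or_running_Suc:
  "measure_pmf.prob (run M alg (Suc n)) (stopped_in I \<union> running)
     \<le> measure_pmf.prob (run M alg n) (stopped_in I \<union> running)"
proof -
  have "measure_pmf.prob (bind_pmf (run M alg n) (step_conf M alg)) (stopped_in I \<union> running)
      \<le> measure_pmf.prob (bind_pmf (run M alg n) return_pmf) (stopped_in I \<union> running)"
  proof (rule measure_bind_pmf_mono)
    show "measure_pmf.prob (step_conf M alg c) (stopped_in I \<union> running)
        \<le> measure_pmf.prob (return_pmf c) (stopped_in I \<union> running)" for c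
      by (cases c) (auto simp: measure_return running_def)
  qed
  then show ?thesis
    by (simp add: bind_return_pmf')
qed

lemma prob_stopped_in_mono:
  "n \<le> m \<Longrightarrow> measure_pmf.prob (run M alg n) (stopped_in I) \<le> measure_pmf.prob (run M alg m) (stopped_in I)"
  by (rule lift_Suc_mono_le[of "\<lambda>n. measure_pmf.prob (run M alg n) (stopped_in I)"])
     (rule prob_stopped_in_Suc)

lemma prob_stopped_in_or_running_antimono:
  "n \<le> m \<Longrightarrow> measure_pmf.prob (run M alg m) (stopped_in I \<union> running)
     \<le> measure_pmf.prob (run M alg n) (stopped_in I \<union> running)"
  by (rule lift_Suc_antimono_le[of "\<lambda>n. measure_pmf.prob (run M alg n) (stopped_in I \<union> running)"])
     (rule prob_stopped_in_or_running_Suc)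

lemma prob_running_antimono:
  "n \<le> m \<Longrightarrow> measure_pmf.prob (run M alg m) running \<le> measure_pmf.prob (run M alg n) running"
  using prob_stopped_in_or_running_antimono[of n m M alg "{}"] by (simp add: stopped_in_def)

lemma prob_stopped_in_le_output_prob:
  "measure_pmf.prob (run M alg n) (stopped_in I) \<le> output_prob M alg I"
  unfolding output_prob_eq_SUP_stopped_in
  by (rule cSUP_upper) (auto intro: bdd_aboveI[where M=1])

lemma output_prob_le_prob_stopped_in_plus_running:
  "output_prob M alg I
     \<le> measure_pmf.prob (run M alg K) (stopped_in I) + measure_pmf.prob (run M alg K) running"
  unfolding output_prob_eq_SUP_stopped_in
proof (rule cSUP_least)
  fix n
  have "measure_pmf.prob (run M alg n) (stopped_in I) \<le> measure_pmf.prob (run M alg (max n K)) (stopped_in I)"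
    by (rule prob_stopped_in_mono) simp
  also have "\<dots> \<le> measure_pmf.prob (run M alg (max n K)) (stopped_in I \<union> running)"
    by (rule measure_pmf.finite_measure_mono) auto
  also have "\<dots> \<le> measure_pmf.prob (run M alg K) (stopped_in I \<union> running)"
    by (rule prob_stopped_in_or_running_antimono) simp
  also have "\<dots> = measure_pmf.prob (run M alg K) (stopped_in I) + measure_pmf.prob (run M alg K) running"
    by (rule measure_pmf.finite_measure_Union) (auto simp: stopped_in_def running_def)
  finally show "measure_pmf.prob (run M alg n) (stopped_in I) \<le> \<dots>" .
qed simp

lemma output_prob_disjoint:
  assumes "I \<inter> J = {}"
  shows "output_prob M alg I + output_prob M alg J \<le> 1"
proof -
  have "measure_pmf.prob (run M alg m) (stopped_in J) \<le> 1 - output_prob M alg I" for m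
  proof -
    have "measure_pmf.prob (run M alg n) (stopped_in I) \<le> 1 - measure_pmf.prob (run M alg m) (stopped_in J)" for n
    proof -
      let ?k = "max n m"
      have "measure_pmf.prob (run M alg ?k) (stopped_in I) + measure_pmf.prob (run M alg ?k) (stopped_in J)
          = measure_pmf.prob (run M alg ?k) (stopped_in I \<union> stopped_in J)"
        using assms by (intro measure_pmf.finite_measure_Union[symmetric]) (auto simp: stopped_in_def)
      also have "\<dots> \<le> 1"
        by simp
      finally show ?thesis
        using prob_stopped_in_mono[of n ?k M alg I] prob_stopped_in_mono[of m ?k M alg J] by simp
    qed
    then have "output_prob M alg I \<le> 1 - measure_pmf.prob (run M alg m) (stopped_in J)"
      unfolding output_prob_eq_SUP_stopped_in by (intro cSUP_least) auto
    then show ?thesis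
      by simp
  qed
  then have "output_prob M alg J \<le> 1 - output_prob M alg I"
    unfolding output_prob_eq_SUP_stopped_in[of M alg J] by (intro cSUP_least) auto
  then show ?thesis
    by simp
qed

lemma expected_samples_ge:
  "ennreal (real K * measure_pmf.prob (run M alg K) running) \<le> expected_samples M alg"
proof -
  let ?p = "\<lambda>n. measure_pmf.prob (run M alg n) running"
  have "ennreal (real K * ?p K) = (\<Sum>n<K. ennreal (?p K))"
    by (simp add: ennreal_mult' ennreal_of_nat_eq_real_of_nat)
  also have "\<dots> \<le> (\<Sum>n<K. ennreal (?p (Suc n)))"
    by (intro sum_mono ennreal_leI prob_running_antimono) simp
  also have "\<dots> \<le> (\<Sum>n. ennreal (?p (Suc n)))"
    by (rule sum_le_suminf) auto
  finally show ?thesis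
    by (simp add: expected_samples_def running_def)
qed

section \<open>Change of measure\<close>

lemma pmf_bind_pmf_ge:
  assumes "\<And>x. k * pmf p x \<le> pmf p' x" and "\<And>x. l * pmf (f x) c \<le> pmf (f' x) c"
    and "0 \<le> k" and "0 \<le> l"
  shows "k * l * pmf (bind_pmf p f) c \<le> pmf (bind_pmf p' f') c"
proof -
  have "ennreal (k * l * pmf (bind_pmf p f) c)
      = (\<integral>\<^sup>+x. ennreal (k * pmf p x) * ennreal (l * pmf (f x) c) \<partial>count_space UNIV)"
    using assms(3,4)
    by (simp add: ennreal_pmf_bind nn_integral_measure_pmf ennreal_mult' nn_integral_cmult[symmetric]
        mult_ac)
  also have "\<dots> \<le> (\<integral>\<^sup>+x. ennreal (pmf p' x) * ennreal (pmf (f' x) c) \<partial>count_space UNIV)"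
    by (intro nn_integral_mono mult_mono ennreal_leI assms(1,2)) auto
  also have "\<dots> = ennreal (pmf (bind_pmf p' f') c)"
    by (simp add: ennreal_pmf_bind nn_integral_measure_pmf)
  finally show ?thesis
    by (simp add: ennreal_le_iff)
qed

lemma measure_pmf_ge_of_pmf_ge:
  assumes "\<And>x. k * pmf p x \<le> pmf q x" and "0 \<le> k"
  shows "k * measure_pmf.prob p E \<le> measure_pmf.prob q E"
proof -
  have "ennreal (k * measure_pmf.prob p E) = ennreal k * (\<integral>\<^sup>+x. ennreal (pmf p x) \<partial>count_space E)"
    using assms(2) by (simp add: nn_integral_pmf measure_pmf.emeasure_eq_measure ennreal_mult)
  also have "\<dots> = (\<integral>\<^sup>+x. ennreal (k * pmf p x) \<partial>count_space E)"
    using assms(2) by (simp add: nn_integral_cmult[symmetric] ennreal_mult)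
  also have "\<dots> \<le> (\<integral>\<^sup>+x. ennreal (pmf q x) \<partial>count_space E)"
    by (intro nn_integral_mono ennreal_leI assms(1))
  also have "\<dots> = ennreal (measure_pmf.prob q E)"
    by (simp add: nn_integral_pmf measure_pmf.emeasure_eq_measure)
  finally show ?thesis
    by (simp add: ennreal_le_iff)
qed

lemma pmf_step_conf_ge:
  assumes "trans M' = trans M" and "\<And>s a r. k * pmf (rew M s a) r \<le> pmf (rew M' s a) r"
    and "0 \<le> k" and "k \<le> 1"
  shows "k * pmf (step_conf M alg c0) c \<le> pmf (step_conf M' alg c0) c"
proof -
  have return_ge: "k * pmf (return_pmf c') c \<le> pmf (return_pmf c') c" for c' :: "('a, 'b) config"
    using assms(3,4) by (simp add: mult_left_le_one_le)
  have query_ge: "k * pmf (rew M s a \<bind> f) c \<le> pmf (rew M' s a \<bind> f) c" for s a f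
    using pmf_bind_pmf_ge[OF assms(2), of 1 f c f] assms(3) by simp
  show ?thesis
  proof (cases c0)
    case (Running h)
    have "1 * k * pmf (step_conf M alg c0) c \<le> pmf (step_conf M' alg c0) c"
      unfolding Running step_conf.simps assms(1)
      by (rule pmf_bind_pmf_ge) (use assms(3) return_ge query_ge in \<open>auto split: decision.split\<close>)
    then show ?thesis
      by simp
  qed (use return_ge in simp)
qed

lemma pmf_run_ge:
  assumes "trans M' = trans M" and "\<And>s a r. k * pmf (rew M s a) r \<le> pmf (rew M' s a) r"
    and "0 \<le> k" and "k \<le> 1"
  shows "k ^ n * pmf (run M alg n) c \<le> pmf (run M' alg n) c"
proof (induction n arbitrary: c)
  case (Suc n)
  show ?case
    using pmf_bind_pmf_ge[OF Suc pmf_step_conf_ge[OF assms]] assms(3)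
    by (simp add: mult.commute)
qed simp

section \<open>Two-point lower bound\<close>

lemma expected_samples_gt:
  assumes out: "1 - \<delta> \<le> output_prob M alg I" and out': "1 - \<delta> \<le> output_prob M' alg I'"
    and disj: "I \<inter> I' = {}" and "trans M' = trans M"
    and "\<And>s a r. (1 - \<epsilon>) * pmf (rew M s a) r \<le> pmf (rew M' s a) r"
    and "0 \<le> \<epsilon>" and "\<epsilon> \<le> 1" and "0 < K" and "0 \<le> T"
    and gap: "\<delta> < (1 - \<epsilon>) ^ K * (1 - \<delta> - T / K)"
  shows "ennreal T < expected_samples M alg"
proof (rule ccontr)
  assume "\<not> ennreal T < expected_samples M alg"
  then have "ennreal (real K * measure_pmf.prob (run M alg K) running) \<le> ennreal T"
    using expected_samples_ge[of K M alg] by simp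
  then have "measure_pmf.prob (run M alg K) running \<le> T / K"
    using \<open>0 < K\<close> \<open>0 \<le> T\<close> by (simp add: ennreal_le_iff field_simps)
  then have "1 - \<delta> - T / K \<le> measure_pmf.prob (run M alg K) (stopped_in I)"
    using out output_prob_le_prob_stopped_in_plus_running[of M alg I K] by linarith
  then have "(1 - \<epsilon>) ^ K * (1 - \<delta> - T / K) \<le> (1 - \<epsilon>) ^ K * measure_pmf.prob (run M alg K) (stopped_in I)"
    using \<open>\<epsilon> \<le> 1\<close> by (intro mult_left_mono) auto
  also have "\<dots> \<le> measure_pmf.prob (run M' alg K) (stopped_in I)"
    by (intro measure_pmf_ge_of_pmf_ge pmf_run_ge) (use assms(4-7) in auto)
  also have "\<dots> \<le> output_prob M' alg I"
    by (rule prob_stopped_in_le_output_prob)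
  also have "\<dots> \<le> \<delta>"
    using output_prob_disjoint[OF disj, of M' alg] out' by linarith
  finally show False
    using gap by linarith
qed

lemma exists_horizon:
  fixes \<delta> T :: real
  assumes "0 \<le> \<delta>" and "\<delta> < 1/2" and "0 \<le> T"
  shows "\<exists>K \<epsilon>. 0 < K \<and> 0 < \<epsilon> \<and> \<epsilon> \<le> 1 \<and> \<delta> < (1 - \<epsilon>) ^ K * (1 - \<delta> - T / K)"
proof -
  define \<gamma> where "\<gamma> = 1 - 2 * \<delta>"
  define K :: nat where "K = nat \<lceil>4 * T / \<gamma>\<rceil> + 1"
  define \<epsilon> where "\<epsilon> = \<gamma> / (4 * K)"
  have "0 < \<gamma>" "\<gamma> \<le> 1" "0 < K"
    using assms by (auto simp: \<gamma>_def K_def)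
  have "4 * T / \<gamma> \<le> K"
    unfolding K_def by linarith
  then have T_K: "T / K \<le> \<gamma> / 4"
    using \<open>0 < \<gamma>\<close> \<open>0 < K\<close> by (simp add: field_simps)
  have "0 < \<epsilon>" "\<epsilon> \<le> 1"
    using \<open>0 < \<gamma>\<close> \<open>\<gamma> \<le> 1\<close> \<open>0 < K\<close> by (auto simp: \<epsilon>_def field_simps)
  have "1 - \<gamma> / 4 = 1 + real K * (- \<epsilon>)"
    using \<open>0 < K\<close> by (simp add: \<epsilon>_def)
  also have "\<dots> \<le> (1 - \<epsilon>) ^ K"
    using Bernoulli_inequality[of "- \<epsilon>" K] \<open>\<epsilon> \<le> 1\<close> by simp
  finally have "(1 - \<gamma> / 4) * (1 - \<delta> - \<gamma> / 4) \<le> (1 - \<epsilon>) ^ K * (1 - \<delta> - T / K)"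
    using T_K assms \<open>0 < \<gamma>\<close> \<open>\<gamma> \<le> 1\<close> \<open>\<epsilon> \<le> 1\<close>
    by (intro mult_mono) (simp_all add: \<gamma>_def)
  moreover have "\<delta> < (1 - \<gamma> / 4) * (1 - \<delta> - \<gamma> / 4)"
  proof -
    have "\<delta> * \<delta> \<le> \<delta> * (1/2)"
      using assms by (intro mult_left_mono) auto
    moreover have "(1 - \<gamma> / 4) * (1 - \<delta> - \<gamma> / 4) = (9 - 4 * (\<delta> * \<delta>)) / 16"
      by (simp add: \<gamma>_def field_simps)
    ultimately show ?thesis
      using assms by simp
  qed
  ultimately show ?thesis
    using \<open>0 < K\<close> \<open>0 < \<epsilon>\<close> \<open>\<epsilon> \<le> 1\<close> by fastforce
qed

section \<open>Ergodicity\<close>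

lemma avoid_prob_nonneg_le:
  fixes M :: "('s::finite, 'a) mdp"
  assumes "\<And>s a. m \<le> pmf (trans M s a) t"
  shows "0 \<le> avoid_prob M pol t n s \<and> avoid_prob M pol t n s \<le> (1 - m) ^ n"
proof (induction n arbitrary: s)
  case (Suc n)
  let ?p = "pmf (trans M s (pol s))"
  have "m \<le> 1"
    using assms[of s "pol s"] pmf_le_1[of "trans M s (pol s)" t] by linarith
  have avoid_t: "avoid_prob M pol t n t = 0"
    by (cases n) auto
  have "(\<Sum>y\<in>UNIV. ?p y * avoid_prob M pol t n y) \<le> (\<Sum>y\<in>UNIV. ?p y * (1 - m) ^ n - of_bool (y = t) * ?p t * (1 - m) ^ n)"
    using Suc.IH avoid_t by (intro sum_mono) (auto intro: mult_left_mono)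
  also have "\<dots> = (1 - ?p t) * (1 - m) ^ n"
    by (simp add: sum_subtractf sum_distrib_left[symmetric] sum_pmf_eq_1 algebra_simps)
  also have "\<dots> \<le> (1 - m) ^ Suc n"
    using assms[of s "pol s"] \<open>m \<le> 1\<close> by (simp add: mult_right_mono)
  finally have "(\<Sum>y\<in>UNIV. ?p y * avoid_prob M pol t n y) \<le> (1 - m) ^ Suc n" .
  moreover have "0 \<le> (\<Sum>y\<in>UNIV. ?p y * avoid_prob M pol t n y)"
    using Suc.IH by (intro sum_nonneg) simp
  ultimately show ?case
    using \<open>m \<le> 1\<close> by simp
qed simp

lemma ergodicI_trans_ge:
  fixes M :: "('s::finite, 'a) mdp"
  assumes "0 < m" and "\<And>s a t. m \<le> pmf (trans M s a) t"
  shows "ergodic M"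
  unfolding ergodic_def expected_hitting_time_def
proof (intro allI)
  fix pol s t
  have "m \<le> 1"
    using assms(2)[of s "pol s" t] pmf_le_1[of "trans M s (pol s)" t] by linarith
  then have "summable (\<lambda>n. (1 - m) ^ n)"
    using assms(1) by (intro summable_geometric) auto
  have "(\<Sum>n. ennreal (avoid_prob M pol t n s)) \<le> (\<Sum>n. ennreal ((1 - m) ^ n))"
    using avoid_prob_nonneg_le[OF assms(2)] by (intro suminf_le ennreal_leI) auto
  also have "\<dots> = ennreal (\<Sum>n. (1 - m) ^ n)"
    using \<open>summable _\<close> \<open>m \<le> 1\<close> by (intro suminf_ennreal2) auto
  finally show "(\<Sum>n. ennreal (avoid_prob M pol t n s)) < \<infinity>"
    using order.strict_trans1 by fastforce
qed

section \<open>Bias span of lazy random walks\<close>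

lemma span_affine:
  fixes f :: "'s::finite \<Rightarrow> real"
  assumes "0 \<le> c"
  shows "span (\<lambda>s. c * f s + k) = c * span f"
proof -
  have mono: "mono (\<lambda>x. c * x + k)"
    using assms by (intro monoI) (simp add: mult_left_mono)
  have "range (\<lambda>s. c * f s + k) = (\<lambda>x. c * x + k) ` range f"
    by auto
  then show ?thesis
    unfolding span_def
    using mono_Max_commute[OF mono, of "range f"] mono_Min_commute[OF mono, of "range f"]
    by (simp add: algebra_simps)
qed

lemma diff_le_span:
  fixes f :: "'s::finite \<Rightarrow> real"
  shows "f s - f t \<le> span f"
  unfolding span_def by (intro diff_mono Max_ge Min_le) auto

lemma opt_bias_span_eqI:
  fixes M :: "('s::finite, 'a::finite) mdp"
  assumes "optimality_eq M g \<beta>" and "\<And>g b. optimality_eq M g b \<Longrightarrow> \<exists>k. \<forall>s. b s = \<beta> s + k"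
  shows "opt_bias_span M = span \<beta>"
  unfolding opt_bias_span_def
proof (rule the_equality)
  show "\<exists>g b. optimality_eq M g b \<and> span \<beta> = span b"
    using assms(1) by blast
next
  fix h
  assume "\<exists>g b. optimality_eq M g b \<and> h = span b"
  then obtain g' b k where "h = span b" and "\<forall>s. b s = \<beta> s + k"
    using assms(2) by blast
  moreover from this(2) have "b = (\<lambda>s. \<beta> s + k)"
    by (intro ext) simp
  ultimately have "h = span (\<lambda>s. \<beta> s + k)"
    by simp
  then show "h = span \<beta>"
    using span_affine[of 1 \<beta> k] by simp
qed

definition lazy_walk :: "real \<Rightarrow> 's::finite \<Rightarrow> 's pmf" where
  "lazy_walk q s = bernoulli_pmf q \<bind> (\<lambda>jump. if jump then pmf_of_set UNIV else return_pmf s)"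

lemma pmf_lazy_walk:
  fixes s t :: "'s::finite"
  assumes "0 \<le> q" and "q \<le> 1"
  shows "pmf (lazy_walk q s) t = q / CARD('s) + (1 - q) * of_bool (t = s)"
  using assms by (simp add: lazy_walk_def pmf_bind)

definition lazy_walk_mdp :: "real \<Rightarrow> ('s::finite \<Rightarrow> real pmf) \<Rightarrow> ('s, 'a) mdp" where
  "lazy_walk_mdp q R = \<lparr>trans = (\<lambda>s a. lazy_walk q s), rew = (\<lambda>s a. R s)\<rparr>"

lemma ergodic_lazy_walk_mdp:
  assumes "0 < q" and "q \<le> 1"
  shows "ergodic (lazy_walk_mdp q R :: ('s::finite, 'a) mdp)"
proof (rule ergodicI_trans_ge)
  show "0 < q / CARD('s)"
    using assms by simp
  show "q / CARD('s) \<le> pmf (trans (lazy_walk_mdp q R :: ('s, 'a) mdp) s a) t" for s a t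
    using assms pmf_lazy_walk[of q s t] by (simp add: lazy_walk_mdp_def)
qed

lemma optimality_eq_lazy_walk_mdp_iff:
  assumes "0 \<le> q" and "q \<le> 1"
  shows "optimality_eq (lazy_walk_mdp q R :: ('s::finite, 'a::finite) mdp) g b \<longleftrightarrow>
    (\<forall>s. q * b s = measure_pmf.expectation (R s) (\<lambda>r. r) - g + q * (\<Sum>t\<in>UNIV. b t) / CARD('s))"
proof -
  have step: "(\<Sum>t\<in>UNIV. pmf (lazy_walk q s) t * b t) = q * (\<Sum>t\<in>UNIV. b t) / CARD('s) + (1 - q) * b s" for s
  proof -
    have "(\<Sum>t\<in>UNIV. pmf (lazy_walk q s) t * b t)
        = (\<Sum>t\<in>UNIV. q / CARD('s) * b t) + (\<Sum>t\<in>UNIV. (1 - q) * (of_bool (t = s) * b t))"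
      using assms by (simp add: pmf_lazy_walk distrib_right sum.distrib mult.assoc)
    then show ?thesis
      by (simp add: sum_distrib_left[symmetric] sum_divide_distrib[symmetric])
  qed
  have "range (\<lambda>a::'a. v) = {v}" for v :: real
    by auto
  then have "optimality_eq (lazy_walk_mdp q R :: ('s, 'a) mdp) g b \<longleftrightarrow>
      (\<forall>s. g + b s = measure_pmf.expectation (R s) (\<lambda>r. r) + (q * (\<Sum>t\<in>UNIV. b t) / CARD('s) + (1 - q) * b s))"
    unfolding optimality_eq_def by (simp only: lazy_walk_mdp_def mdp.simps mean_rew_def step Max_singleton)
  also have "\<dots> \<longleftrightarrow>
      (\<forall>s. q * b s = measure_pmf.expectation (R s) (\<lambda>r. r) - g + q * (\<Sum>t\<in>UNIV. b t) / CARD('s))"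
    by (simp add: algebra_simps)
  finally show ?thesis .
qed

lemma opt_bias_span_lazy_walk_mdp:
  assumes "0 < q" and "q \<le> 1"
  shows "opt_bias_span (lazy_walk_mdp q R :: ('s::finite, 'a::finite) mdp)
    = span (\<lambda>s. measure_pmf.expectation (R s) (\<lambda>r. r)) / q"
proof -
  define m where "m = (\<lambda>s. measure_pmf.expectation (R s) (\<lambda>r. r))"
  have opt: "optimality_eq (lazy_walk_mdp q R :: ('s, 'a) mdp) g b \<longleftrightarrow>
      (\<forall>s. q * b s = m s - g + q * (\<Sum>t\<in>UNIV. b t) / CARD('s))" for g b
    unfolding m_def by (rule optimality_eq_lazy_walk_mdp_iff) (use assms in auto)
  have "opt_bias_span (lazy_walk_mdp q R :: ('s, 'a) mdp) = span (\<lambda>s. m s / q)"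
  proof (rule opt_bias_span_eqI)
    show "optimality_eq (lazy_walk_mdp q R :: ('s, 'a) mdp) ((\<Sum>t\<in>UNIV. m t) / CARD('s)) (\<lambda>s. m s / q)"
      using assms by (simp add: opt sum_divide_distrib[symmetric])
    fix g b
    assume "optimality_eq (lazy_walk_mdp q R :: ('s, 'a) mdp) g b"
    then have "\<forall>s. b s = m s / q + ((\<Sum>t\<in>UNIV. b t) / CARD('s) - g / q)"
      using assms by (simp add: opt field_simps)
    then show "\<exists>k. \<forall>s. b s = m s / q + k"
      by blast
  qed
  also have "\<dots> = span m / q"
    using span_affine[of "1 / q" m 0] assms by simp
  finally show ?thesis
    by (simp add: m_def)
qed

section \<open>The hard instances\<close>

lemma expectation_bernoulli_reward:
  fixes \<epsilon> :: real
  assumes "0 \<le> \<epsilon>" "\<epsilon> \<le> 1"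
  shows "measure_pmf.expectation (map_pmf of_bool (bernoulli_pmf \<epsilon>)) (\<lambda>r. r) = (\<epsilon>::real)"
  using assms by simp

lemma pmf_bernoulli_reward_ge:
  fixes \<epsilon> :: real
  assumes "0 \<le> \<epsilon>" "\<epsilon> \<le> 1"
  shows "(1 - \<epsilon>) * pmf (return_pmf 0) r \<le> pmf (map_pmf of_bool (bernoulli_pmf \<epsilon>)) (r::real)"
proof (cases "r = 0")
  case True
  have "pmf (map_pmf of_bool (bernoulli_pmf \<epsilon>)) (0::real) = pmf (bernoulli_pmf \<epsilon>) False"
  proof -
    have "{b. \<not> b} = {False}"
      by auto
    then show ?thesis
      by (simp add: pmf_map vimage_def measure_pmf_single)
  qed
  then show ?thesis using True assms by simp
qed simp

definition lower_bound_mdp :: "real \<Rightarrow> 's::finite \<Rightarrow> 's \<Rightarrow> real pmf \<Rightarrow> ('s, 'a) mdp" where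
  "lower_bound_mdp q x y \<rho> =
     lazy_walk_mdp q (\<lambda>s. if s = x then \<rho> else return_pmf (if s = y then q / 2 else 0))"

lemma valid_lower_bound_mdp:
  assumes "0 \<le> q" and "q \<le> 1" and "set_pmf \<rho> \<subseteq> {0..1}"
  shows "valid_mdp (lower_bound_mdp q x y \<rho>)"
  using assms by (auto simp: valid_mdp_def lower_bound_mdp_def lazy_walk_mdp_def)

lemma opt_bias_span_lower_bound_mdp_return_0:
  fixes x y :: "'s::finite"
  assumes "x \<noteq> y" and "0 < q" and "q \<le> 1"
  shows "opt_bias_span (lower_bound_mdp q x y (return_pmf 0) :: ('s, 'a::finite) mdp) = 1/2"
proof -
  have "range (\<lambda>s::'s. if s = y then q / 2 else 0) = {0, q / 2}"
    using \<open>x \<noteq> y\<close> by auto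
  then have "span (\<lambda>s::'s. if s = y then q / 2 else 0) = q / 2"
    using \<open>0 < q\<close> by (simp add: span_def)
  moreover have "(\<lambda>s. measure_pmf.expectation (if s = x then return_pmf 0 else return_pmf (if s = y then q / 2 else 0)) (\<lambda>r. r))
      = (\<lambda>s. if s = y then q / 2 else 0)"
    using \<open>x \<noteq> y\<close> by auto
  ultimately show ?thesis
    using assms(2,3) by (simp add: lower_bound_mdp_def opt_bias_span_lazy_walk_mdp)
qed

lemma opt_bias_span_lower_bound_mdp_ge:
  fixes x y z :: "'s::finite"
  assumes "z \<noteq> x" and "z \<noteq> y" and "0 < q" and "q \<le> 1"
  shows "measure_pmf.expectation \<rho> (\<lambda>r. r) / q \<le> opt_bias_span (lower_bound_mdp q x y \<rho> :: ('s, 'a::finite) mdp)"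
proof -
  let ?m = "\<lambda>s. measure_pmf.expectation (if s = x then \<rho> else return_pmf (if s = y then q / 2 else 0)) (\<lambda>r. r)"
  have "measure_pmf.expectation \<rho> (\<lambda>r. r) = ?m x - ?m z"
    using assms(1,2) by simp
  also have "\<dots> \<le> span ?m"
    by (rule diff_le_span)
  finally show ?thesis
    using assms(3,4) by (simp add: lower_bound_mdp_def opt_bias_span_lazy_walk_mdp divide_right_mono)
qed

lemma rew_lower_bound_mdp_ge:
  assumes "\<And>v. (1 - \<epsilon>) * pmf \<rho> v \<le> pmf \<rho>' v" and "0 \<le> \<epsilon>" and "\<epsilon> \<le> 1"
  shows "(1 - \<epsilon>) * pmf (rew (lower_bound_mdp q x y \<rho>) s a) v \<le> pmf (rew (lower_bound_mdp q x y \<rho>') s a) v"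
  using assms by (simp add: lower_bound_mdp_def lazy_walk_mdp_def mult_left_le_one_le)

theorem mainTheorem1:
  fixes \<delta> T \<Delta> :: real
  assumes "CARD('s::finite) = 3" and "CARD('a::finite) = 2"
    and "\<delta> < 1 / (2 * exp 4)" and "T > 0" and "\<Delta> > 0"
  shows "\<exists>M :: ('s, 'a) mdp. valid_mdp M \<and> ergodic M \<and> opt_bias_span M = 1/2 \<and>
           (\<forall>alg :: ('s, 'a) algorithm. tight_bound_alg \<delta> \<Delta> alg \<longrightarrow> expected_samples M alg > ennreal T)"
proof -
  obtain x y z :: 's where "x \<noteq> y" "z \<noteq> x" "z \<noteq> y"
    using assms(1) unfolding card_3_iff by metis
  define \<delta>' where "\<delta>' = max \<delta> 0"
  have "1 / (2 * exp 4) \<le> (1/2 :: real)"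
    by (simp add: field_simps)
  then have "\<delta>' < 1/2"
    using assms(3) unfolding \<delta>'_def by (simp only: max_less_iff_conj) linarith
  then obtain K \<epsilon> where K: "0 < K" "0 < \<epsilon>" "\<epsilon> \<le> 1" "\<delta>' < (1 - \<epsilon>) ^ K * (1 - \<delta>' - T / K)"
    using exists_horizon[of \<delta>' T] assms(4) by (auto simp: \<delta>'_def)
  define q where "q = \<epsilon> / (\<Delta> + 1)"
  have q: "0 < q" "q \<le> 1"
    using K assms(5) by (auto simp: q_def field_simps)
  define M :: "('s, 'a) mdp" where "M = lower_bound_mdp q x y (return_pmf 0)"
  define M' :: "('s, 'a) mdp" where "M' = lower_bound_mdp q x y (map_pmf of_bool (bernoulli_pmf \<epsilon>))"
  have valid: "valid_mdp M" "valid_mdp M'"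
    using q by (auto simp: M_def M'_def intro!: valid_lower_bound_mdp)
  have ergodic: "ergodic M" "ergodic M'"
    using ergodic_lazy_walk_mdp[OF q] by (simp_all add: M_def M'_def lower_bound_mdp_def)
  have span: "opt_bias_span M = 1/2"
    unfolding M_def using \<open>x \<noteq> y\<close> q by (rule opt_bias_span_lower_bound_mdp_return_0)
  have "\<Delta> + 1 \<le> opt_bias_span M'"
    using opt_bias_span_lower_bound_mdp_ge[OF \<open>z \<noteq> x\<close> \<open>z \<noteq> y\<close> q, of "map_pmf of_bool (bernoulli_pmf \<epsilon>)", where 'a='a]
      K(2,3) assms(5) by (simp add: M'_def expectation_bernoulli_reward q_def)
  then have disjoint: "{opt_bias_span M .. opt_bias_span M + \<Delta>} \<inter> {opt_bias_span M' .. opt_bias_span M' + \<Delta>} = {}"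
    using span by auto
  have same_trans: "trans M' = trans M"
    by (simp add: M_def M'_def lower_bound_mdp_def lazy_walk_mdp_def)
  have rew_ge: "(1 - \<epsilon>) * pmf (rew M s a) v \<le> pmf (rew M' s a) v" for s a v
    unfolding M_def M'_def by (rule rew_lower_bound_mdp_ge[OF pmf_bernoulli_reward_ge]) (use K in auto)
  have "expected_samples M alg > ennreal T" if "tight_bound_alg \<delta> \<Delta> alg" for alg
  proof -
    have "1 - \<delta>' \<le> output_prob N alg {opt_bias_span N .. opt_bias_span N + \<Delta>}" if "N \<in> {M, M'}" for N
      using \<open>tight_bound_alg \<delta> \<Delta> alg\<close> that valid ergodic unfolding tight_bound_alg_def \<delta>'_def by force
    then show ?thesis
      using K assms(4) by (intro expected_samples_gt[OF _ _ disjoint same_trans rew_ge]) auto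
  qed
  then show ?thesis
    using valid ergodic span by blast
qed

end
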